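(* Let $N\ge 0$ and let $\mu=(\mu_1,\dots,\mu_{N+1})$ be a partition with $N+1$ parts. Then, for all $z_1,\dots,z_{N+1}$ (with pairwise distinct values so that the defining quotients make sense, the identity then extending polynomially), $$G_\mu(z_1,\dots,z_N,z_{N+1};\beta)=\sum_{\lambda:\ \mu\succ\lambda} G_{\mu/\lambda}(z_{N+1};\beta)\,G_\lambda(z_1,\dots,z_N;\beta),$$ where the sum runs over all partitions $\lambda=(\lambda_1,\dots,\lambda_N)$ with $N$ parts interlacing with $\mu$. At $\beta=0$ this is the corresponding branching rule for Schur and skew Schur polynomials.
   Context: A "partition with $N$ parts" means a weakly decreasing sequence $\lambda=(\lambda_1,\dots,\lambda_N)$ of nonnegative integers (zeros allowed); $|\lambda|=\sum_j\lambda_j$. For such $\lambda$, variables $z_1,\dots,z_N$ and a parameter $\beta$, the Grothendieck polynomial is $$G_\lambda(z_1,\dots,z_N;\beta)=\frac{\det_{1\le j,k\le N}\big(z_j^{\lambda_k+N-k}(1+\beta z_j)^{k-1}\big)}{\prod_{1\le j<k\le N}(z_j-z_k)},$$ (a symmetric polynomial; for $N=0$ it equals $1$). For $\mu$ with $N+1$ parts and $\lambda$ with $N$ parts, write $\mu\succ\lambda$ ("interlace") iff $\mu_j\ge\lambda_j\ge\mu_{j+1}$ for $j=1,\dots,N$. The single-variable skew Grothendieck polynomial is $$G_{\mu/\lambda}(z;\beta)=\begin{cases} z^{|\mu|-|\lambda|}\prod_{j=1}^N\big(1+\beta z-\beta z\,\delta_{\mu_{j+1},\lambda_j}\big) & \text{if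 } \mu\succ\lambda,\\ 0&\text{otherwise,}\end{cases}$$ with $\delta$ the Kronecker delta. *)

theory Defs
  imports Complex_Main "HOL-Combinatorics.Permutations"
begin

text \<open>Partitions with N parts are lists of naturals of length N, weakly decreasing.
  Indices are 0-based: list entry k is the paper's lambda_(k+1); variable z j is z_(j+1).\<close>

definition is_partition :: "nat list \<Rightarrow> bool" where
  "is_partition lam \<longleftrightarrow> sorted_wrt (\<ge>) lam"

definition ldet :: "nat \<Rightarrow> (nat \<Rightarrow> nat \<Rightarrow> 'a::comm_ring_1) \<Rightarrow> 'a" where
  "ldet n M = (\<Sum>p\<in>{p. p permutes {..<n}}. of_int (sign p) * (\<Prod>j<n. M j (p j)))"

text \<open>Grothendieck polynomial G_lambda(z_1..z_N; beta), N = length lam.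
  Entry (j,k), 1-based: z_j^(lam_k + N - k) (1 + beta z_j)^(k-1).\<close>
definition groth :: "nat list \<Rightarrow> (nat \<Rightarrow> complex) \<Rightarrow> complex \<Rightarrow> complex" where
  "groth lam z \<beta> =
     (let N = length lam in
      ldet N (\<lambda>j k. z j ^ (lam ! k + N - 1 - k) * (1 + \<beta> * z j) ^ k)
      / (\<Prod>j<N. \<Prod>k\<in>{j<..<N}. (z j - z k)))"

definition interlace :: "nat list \<Rightarrow> nat list \<Rightarrow> bool" where
  "interlace mu lam \<longleftrightarrow> length mu = length lam + 1 \<and>
     (\<forall>j<length lam. mu ! j \<ge> lam ! j \<and> lam ! j \<ge> mu ! (j + 1))"

definition skew_groth :: "nat list \<Rightarrow> nat list \<Rightarrow> complex \<Rightarrow> complex \<Rightarrow> complex" where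
  "skew_groth mu lam x \<beta> =
     (if interlace mu lam then
        x ^ (sum_list mu - sum_list lam) *
        (\<Prod>j<length lam. (1 + \<beta> * x - \<beta> * x * (if mu ! (j + 1) = lam ! j then 1 else 0)))
      else 0)"

end

theory Submission
  imports Defs "Jordan_Normal_Form.Determinant"
begin

text \<open>
  Put x = z_N. Replacing each column k < N of the numerator determinant of G_\<mu> by
  (1 + \<beta>x) col_k - x^(\<mu>_k - \<mu>_(k+1) + 1) col_(k+1) multiplies the determinant by (1 + \<beta>x)^N.
  A telescoping sum shows that the new entry in row j is (z_j - x) times the sum, over
  \<mu>_(k+1) \<le> l \<le> \<mu>_k, of the skew weight of l times z_j^(l + N - 1 - k) (1 + \<beta>z_j)^k, the
  entry of an N \<times> N Grothendieck numerator with k-th part l; in particular the last row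
  vanishes off the diagonal. Expanding the remaining N \<times> N determinant multilinearly in its
  columns gives the sum over interlacing \<lambda>, and the factors z_j - x cancel against the
  Vandermonde denominator. This needs 1 + \<beta>x \<noteq> 0; the remaining value of \<beta> is handled by
  continuity.
\<close>

section \<open>Leibniz determinants\<close>

lemma ldet_eq_det: "ldet n M = det (mat n n (\<lambda>(j, k). M j k))"
  unfolding ldet_def
  by (subst det_def'[of _ n]) (auto simp: atLeast0LessThan intro!: sum.cong prod.cong)

lemma ldet_cong:
  assumes "\<And>j k. j < n \<Longrightarrow> k < n \<Longrightarrow> M j k = M' j k"
  shows "ldet n M = ldet n M'"
  unfolding ldet_eq_det using assms by (intro arg_cong[where f = det] eq_matI) auto

lemma ldet_mult_rows:
  "ldet n (\<lambda>j k. r j * M j k) = (\<Prod>j<n. r j) * ldet n M"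
  unfolding ldet_def by (simp add: prod.distrib sum_distrib_left mult.left_commute)

lemma prod_permutes_inv_into:
  assumes "p permutes {..<n}"
  shows "(\<Prod>j<n. F (p j) j) = (\<Prod>k<n. F k (inv_into UNIV p k))"
  using prod.permute[OF assms, of "\<lambda>k. F k (inv_into UNIV p k)"] permutes_inverses(2)[OF assms]
  by (simp add: comp_def)

lemma ldet_sum_columns:
  fixes c :: "nat \<Rightarrow> nat \<Rightarrow> 'a::comm_ring_1"
  assumes "\<And>k. k < n \<Longrightarrow> finite (I k)"
  shows "ldet n (\<lambda>j k. \<Sum>l\<in>I k. c k l * g k l j)
       = (\<Sum>f\<in>PiE {..<n} I. (\<Prod>k<n. c k (f k)) * ldet n (\<lambda>j k. g k (f k) j))"
proof -
  let ?S = "{p. p permutes {..<n}}"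
  have "ldet n (\<lambda>j k. \<Sum>l\<in>I k. c k l * g k l j)
      = (\<Sum>p\<in>?S. of_int (sign p) *
           (\<Sum>f\<in>PiE {..<n} I. \<Prod>k<n. c k (f k) * g k (f k) (inv_into UNIV p k)))"
    unfolding ldet_def
    using prod_permutes_inv_into[of _ n "\<lambda>k j. \<Sum>l\<in>I k. c k l * g k l j"]
      prod_sum_PiE[of "{..<n}" I "\<lambda>k l. c k l * g k l (inv_into UNIV _ k)"] assms
    by (intro sum.cong) simp_all
  also have "\<dots> = (\<Sum>f\<in>PiE {..<n} I. \<Sum>p\<in>?S. of_int (sign p) *
           (\<Prod>k<n. c k (f k) * g k (f k) (inv_into UNIV p k)))"
    by (simp add: sum_distrib_left sum.swap[of _ ?S])
  also have "\<dots> = (\<Sum>f\<in>PiE {..<n} I. (\<Prod>k<n. c k (f k)) * ldet n (\<lambda>j k. g k (f k) j))"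
    unfolding ldet_def sum_distrib_left
    using prod_permutes_inv_into[of _ n "\<lambda>k j. g k (f k) j" for f]
    by (intro sum.cong refl) (simp add: prod.distrib algebra_simps)
  finally show ?thesis .
qed

text \<open>These column operations are right multiplication by a lower bidiagonal matrix.\<close>

lemma ldet_bidiagonal_column_operations:
  fixes M :: "nat \<Rightarrow> nat \<Rightarrow> 'a::comm_ring_1"
  shows "ldet (Suc n) (\<lambda>j k. if k < n then a k * M j k + t k * M j (Suc k) else M j k)
       = (\<Prod>k<n. a k) * ldet (Suc n) M"
proof -
  define A where "A = mat (Suc n) (Suc n) (\<lambda>(j, k). M j k)"
  define E where "E = mat (Suc n) (Suc n) (\<lambda>(i, k).
    if i = k then (if k < n then a k else 1) else if i = Suc k then t k else 0)"
  have A: "A \<in> carrier_mat (Suc n) (Suc n)" and E: "E \<in> carrier_mat (Suc n) (Suc n)"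
    unfolding A_def E_def by auto
  have "det E = prod_list (diag_mat E)"
    by (rule det_lower_triangular[OF _ E]) (auto simp: E_def)
  also have "\<dots> = (\<Prod>i<Suc n. if i < n then a i else 1)"
    using E by (simp add: prod_list_diag_prod E_def atLeast0LessThan)
  also have "\<dots> = (\<Prod>k<n. a k)"
    by (simp add: prod.If_cases)
  finally have det_E: "det E = (\<Prod>k<n. a k)" .
  have entry: "(A * E) $$ (j, k) = (if k < n then a k * M j k + t k * M j (Suc k) else M j k)"
    if j: "j < Suc n" and k: "k < Suc n" for j k
  proof -
    have "(A * E) $$ (j, k) = (\<Sum>i<Suc n. (if i = k then M j i * (if k < n then a k else 1) else 0)
                                           + (if i = Suc k then M j i * t k else 0))"
      using j k A E by (auto simp: scalar_prod_def A_def E_def atLeast0LessThan intro!: sum.cong)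
    also have "\<dots> = (if k < n then a k * M j k + t k * M j (Suc k) else M j k)"
      using k by (cases "k < n") (auto simp: sum.distrib mult.commute less_Suc_eq)
    finally show ?thesis .
  qed
  have "A * E = mat (Suc n) (Suc n)
          (\<lambda>(j, k). if k < n then a k * M j k + t k * M j (Suc k) else M j k)"
    using A E entry by (intro eq_matI) auto
  then show ?thesis
    using det_mult[OF A E] det_E by (simp add: ldet_eq_det A_def mult.commute)
qed

lemma ldet_last_row_zero:
  fixes M :: "nat \<Rightarrow> nat \<Rightarrow> 'a::comm_ring_1"
  assumes "\<And>k. k < n \<Longrightarrow> M n k = 0"
  shows "ldet (Suc n) M = M n n * ldet n M"
proof -
  define A where "A = mat (Suc n) (Suc n) (\<lambda>(j, k). M j k)"
  have A: "A \<in> carrier_mat (Suc n) (Suc n)" unfolding A_def by simp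
  have "det A = (\<Sum>k<Suc n. A $$ (n, k) * cofactor A n k)"
    by (rule laplace_expansion_row[OF A]) simp
  also have "\<dots> = M n n * det (mat_delete A n n)"
    using assms by (simp add: A_def cofactor_def)
  also have "mat_delete A n n = mat n n (\<lambda>(j, k). M j k)"
    by (rule eq_matI) (auto simp: A_def mat_delete_def)
  finally show ?thesis by (simp add: ldet_eq_det A_def)
qed

section \<open>Interlacing partitions\<close>

lemma is_partition_nth_antimono:
  assumes "is_partition mu" "i \<le> j" "j < length mu"
  shows "mu ! j \<le> mu ! i"
  using assms unfolding is_partition_def
  by (cases "i = j") (auto simp: sorted_wrt_iff_nth_less)

text \<open>A partition interlacing with \<open>mu\<close> is a free choice of \<open>lam ! k\<close> in each interval
  \<open>[mu ! (k + 1), mu ! k]\<close>; being weakly decreasing is then automatic.\<close>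

lemma interlacing_partitions_bij_betw_PiE:
  assumes mu: "is_partition mu" "length mu = Suc N"
  shows "bij_betw (\<lambda>f. map f [0..<N]) (PiE {..<N} (\<lambda>k. {mu ! Suc k..mu ! k}))
      {lam. is_partition lam \<and> length lam = N \<and> interlace mu lam}"
proof (rule bij_betw_imageI)
  let ?P = "PiE {..<N} (\<lambda>k. {mu ! Suc k..mu ! k})"
  show "inj_on (\<lambda>f. map f [0..<N]) ?P"
    by (rule inj_onI, rule PiE_ext) (auto simp: map_eq_conv)
  show "(\<lambda>f. map f [0..<N]) ` ?P = {lam. is_partition lam \<and> length lam = N \<and> interlace mu lam}"
  proof (intro equalityI subsetI)
    fix lam assume "lam \<in> (\<lambda>f. map f [0..<N]) ` ?P"
    then obtain f where f: "f \<in> ?P" and lam: "lam = map f [0..<N]" by auto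
    have f_bounds: "mu ! Suc k \<le> f k \<and> f k \<le> mu ! k" if "k < N" for k
      using PiE_mem[OF f, of k] that by simp
    have "lam ! j \<le> lam ! i" if "i < j" "j < N" for i j
    proof -
      have "lam ! j \<le> mu ! j" using f_bounds[of j] that lam by simp
      also have "\<dots> \<le> mu ! Suc i"
        using is_partition_nth_antimono[OF mu(1), of "Suc i" j] that mu(2) by simp
      also have "\<dots> \<le> lam ! i" using f_bounds[of i] that lam by simp
      finally show ?thesis .
    qed
    then show "lam \<in> {lam. is_partition lam \<and> length lam = N \<and> interlace mu lam}"
      using f_bounds mu(2) lam by (auto simp: is_partition_def sorted_wrt_iff_nth_less interlace_def)
  next
    fix lam assume "lam \<in> {lam. is_partition lam \<and> length lam = N \<and> interlace mu lam}"
    then have len: "length lam = N" and il: "interlace mu lam" by auto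
    have "restrict (\<lambda>k. lam ! k) {..<N} \<in> ?P"
      using il len unfolding restrict_PiE_iff interlace_def by simp
    moreover have "lam = map (restrict (\<lambda>k. lam ! k) {..<N}) [0..<N]"
      by (rule nth_equalityI) (auto simp: len)
    ultimately show "lam \<in> (\<lambda>f. map f [0..<N]) ` ?P" by blast
  qed
qed

section \<open>The branching identity for a single column\<close>

text \<open>\<open>branch_weight x \<beta> (mu ! k) (mu ! (k + 1)) (lam ! k)\<close> is the contribution of the
  \<open>k\<close>-th part of \<open>lam\<close> to \<open>G_{mu/lam}(x)\<close>, the power \<open>x ^ (mu ! N)\<close> apart.\<close>

definition branch_weight :: "'a::comm_ring_1 \<Rightarrow> 'a \<Rightarrow> nat \<Rightarrow> nat \<Rightarrow> nat \<Rightarrow> 'a" where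
  "branch_weight x \<beta> a b l = x ^ (a - l) * (1 + \<beta> * x - \<beta> * x * (if b = l then 1 else 0))"

definition groth_entry :: "nat \<Rightarrow> nat \<Rightarrow> nat \<Rightarrow> 'a::comm_ring_1 \<Rightarrow> 'a \<Rightarrow> 'a" where
  "groth_entry n e k \<beta> y = y ^ (e + n - 1 - k) * (1 + \<beta> * y) ^ k"

lemma skew_groth_map_PiE:
  assumes mu: "length mu = Suc N"
    and f: "f \<in> PiE {..<N} (\<lambda>k. {mu ! Suc k..mu ! k})"
  shows "skew_groth mu (map f [0..<N]) x \<beta>
       = x ^ (mu ! N) * (\<Prod>k<N. branch_weight x \<beta> (mu ! k) (mu ! Suc k) (f k))"
proof -
  have f_bounds: "mu ! Suc k \<le> f k \<and> f k \<le> mu ! k" if "k < N" for k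
    using PiE_mem[OF f, of k] that by simp
  have "interlace mu (map f [0..<N])"
    unfolding interlace_def using f_bounds mu by simp
  moreover have "sum_list mu - sum_list (map f [0..<N]) = mu ! N + (\<Sum>k<N. mu ! k - f k)"
  proof -
    have "sum_list mu = (\<Sum>k<N. mu ! k) + mu ! N"
      using mu by (simp add: sum_list_sum_nth atLeast0LessThan)
    moreover have "sum_list (map f [0..<N]) = (\<Sum>k<N. f k)"
      by (simp add: sum_list_sum_nth atLeast0LessThan)
    moreover have "(\<Sum>k<N. mu ! k - f k) = (\<Sum>k<N. mu ! k) - (\<Sum>k<N. f k)"
      using f_bounds by (intro sum_subtractf_nat) auto
    moreover have "(\<Sum>k<N. f k) \<le> (\<Sum>k<N. mu ! k)"
      using f_bounds by (intro sum_mono) auto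
    ultimately show ?thesis by simp
  qed
  ultimately show ?thesis
    by (simp add: skew_groth_def branch_weight_def power_add power_sum prod.distrib)
qed

lemma branch_weight_telescope:
  fixes x y \<beta> :: "'a::comm_ring_1"
  assumes "b \<le> a"
  shows "(y - x) * (\<Sum>l=b..a. branch_weight x \<beta> a b l * y ^ l)
       = (1 + \<beta> * x) * y ^ Suc a - x ^ Suc (a - b) * y ^ b * (1 + \<beta> * y)"
proof -
  define S where "S d = (\<Sum>l=b..b + d. branch_weight x \<beta> (b + d) b l * y ^ l)" for d
  have "(y - x) * S d = (1 + \<beta> * x) * y ^ Suc (b + d) - x ^ Suc d * y ^ b * (1 + \<beta> * y)" for d
  proof (induction d)
    case 0
    then show ?case by (simp add: S_def branch_weight_def algebra_simps)
  next
    case (Suc d)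
    have "S (Suc d) = x * S d + (1 + \<beta> * x) * y ^ Suc (b + d)"
      unfolding S_def sum_distrib_left add_Suc_right
      by (subst sum.nat_ivl_Suc')
        (auto intro!: sum.cong simp: branch_weight_def Suc_diff_le algebra_simps)
    then have "(y - x) * S (Suc d) = x * ((y - x) * S d) + (y - x) * ((1 + \<beta> * x) * y ^ Suc (b + d))"
      by (simp only: distrib_left mult.left_commute)
    also have "\<dots> = (1 + \<beta> * x) * y ^ Suc (b + Suc d) - x ^ Suc (Suc d) * y ^ b * (1 + \<beta> * y)"
      unfolding Suc.IH by (simp add: algebra_simps)
    finally show ?case .
  qed
  moreover obtain d where "a = b + d" using assms le_Suc_ex by blast
  ultimately show ?thesis by (simp add: S_def)
qed

lemma groth_entry_branch_column:
  fixes x y \<beta> :: "'a::comm_ring_1"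
  assumes "b \<le> a" "k < N"
  shows "(y - x) * (\<Sum>l=b..a. branch_weight x \<beta> a b l * groth_entry N l k \<beta> y)
       = (1 + \<beta> * x) * groth_entry (Suc N) a k \<beta> y
         - x ^ Suc (a - b) * groth_entry (Suc N) b (Suc k) \<beta> y"
proof -
  have "(\<Sum>l=b..a. branch_weight x \<beta> a b l * groth_entry N l k \<beta> y)
      = y ^ (N - Suc k) * (1 + \<beta> * y) ^ k * (\<Sum>l=b..a. branch_weight x \<beta> a b l * y ^ l)"
  proof -
    have exponent: "l + N - 1 - k = N - Suc k + l" for l
      using assms(2) by simp
    show ?thesis
      unfolding sum_distrib_left groth_entry_def exponent power_add
      by (intro sum.cong refl) (simp add: algebra_simps)
  qed
  then have "(y - x) * (\<Sum>l=b..a. branch_weight x \<beta> a b l * groth_entry N l k \<beta> y)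
      = y ^ (N - Suc k) * (1 + \<beta> * y) ^ k * ((y - x) * (\<Sum>l=b..a. branch_weight x \<beta> a b l * y ^ l))"
    by (simp only: mult.left_commute)
  also have "\<dots> = y ^ (N - Suc k) * (1 + \<beta> * y) ^ k
        * ((1 + \<beta> * x) * y ^ Suc a - x ^ Suc (a - b) * y ^ b * (1 + \<beta> * y))"
    by (simp only: branch_weight_telescope[OF assms(1)])
  also have "\<dots> = (1 + \<beta> * x) * (y ^ (N - Suc k + Suc a) * (1 + \<beta> * y) ^ k)
      - x ^ Suc (a - b) * (y ^ (N - Suc k + b) * (1 + \<beta> * y) ^ Suc k)"
    by (simp add: power_add algebra_simps)
  also have "N - Suc k + Suc a = a + Suc N - 1 - k"
    using assms(2) by simp
  also have "N - Suc k + b = b + Suc N - 1 - Suc k"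
    using assms(2) by simp
  finally show ?thesis by (simp only: groth_entry_def)
qed

lemma prod_differences_lessThan_Suc:
  fixes z :: "nat \<Rightarrow> 'a::comm_ring_1"
  shows "(\<Prod>j<Suc N. \<Prod>k\<in>{j<..<Suc N}. z j - z k)
       = (\<Prod>j<N. \<Prod>k\<in>{j<..<N}. z j - z k) * (\<Prod>j<N. z j - z N)"
proof -
  have "{j<..<Suc N} = insert N {j<..<N}" if "j < N" for j
    using that by auto
  then have "(\<Prod>j<N. \<Prod>k\<in>{j<..<Suc N}. z j - z k) = (\<Prod>j<N. (z j - z N) * (\<Prod>k\<in>{j<..<N}. z j - z k))"
    by (intro prod.cong) auto
  moreover have "{N<..<Suc N} = {}"
    by auto
  ultimately show ?thesis
    by (simp add: prod.distrib mult.commute)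
qed

lemma groth_numerator_branching:
  fixes z :: "nat \<Rightarrow> 'a::idom"
  assumes mu: "is_partition mu" "length mu = Suc N" and nondeg: "1 + \<beta> * z N \<noteq> 0"
  shows "ldet (Suc N) (\<lambda>j k. groth_entry (Suc N) (mu ! k) k \<beta> (z j))
       = z N ^ (mu ! N) * (\<Prod>j<N. z j - z N) *
         (\<Sum>f\<in>PiE {..<N} (\<lambda>k. {mu ! Suc k..mu ! k}).
            (\<Prod>k<N. branch_weight (z N) \<beta> (mu ! k) (mu ! Suc k) (f k))
            * ldet N (\<lambda>j k. groth_entry N (f k) k \<beta> (z j)))"
proof -
  define x where "x = z N"
  define M where "M = (\<lambda>j k. groth_entry (Suc N) (mu ! k) k \<beta> (z j))"
  define C where "C y k = (\<Sum>l=mu ! Suc k..mu ! k.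
    branch_weight x \<beta> (mu ! k) (mu ! Suc k) l * groth_entry N l k \<beta> y)" for y k
  define t where "t k = - (x ^ Suc (mu ! k - mu ! Suc k))" for k
  define M' where "M' j k = (if k < N then (1 + \<beta> * x) * M j k + t k * M j (Suc k) else M j k)"
    for j k
  define S where "S = (\<Sum>f\<in>PiE {..<N} (\<lambda>k. {mu ! Suc k..mu ! k}).
    (\<Prod>k<N. branch_weight x \<beta> (mu ! k) (mu ! Suc k) (f k))
    * ldet N (\<lambda>j k. groth_entry N (f k) k \<beta> (z j)))"
  have column: "M' j k = (z j - x) * C (z j) k" if "k < N" for j k
  proof -
    have "mu ! Suc k \<le> mu ! k"
      using is_partition_nth_antimono[OF mu(1), of k "Suc k"] that mu(2) by simp
    from groth_entry_branch_column[OF this that, of "z j" x \<beta>] that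
    show ?thesis
      by (simp add: M'_def M_def C_def t_def)
  qed
  have "ldet (Suc N) M' = (\<Prod>k<N. 1 + \<beta> * x) * ldet (Suc N) M"
    unfolding M'_def by (rule ldet_bidiagonal_column_operations)
  then have "(1 + \<beta> * x) ^ N * ldet (Suc N) M = ldet (Suc N) M'"
    by simp
  also have "\<dots> = M' N N * ldet N M'"
    by (rule ldet_last_row_zero) (simp add: column x_def)
  also have "M' N N = (1 + \<beta> * x) ^ N * x ^ (mu ! N)"
    by (simp add: M'_def M_def groth_entry_def x_def)
  also have "ldet N M' = ldet N (\<lambda>j k. (z j - x) * C (z j) k)"
    by (rule ldet_cong) (simp add: column)
  also have "\<dots> = (\<Prod>j<N. z j - x) * ldet N (\<lambda>j k. C (z j) k)"
    by (rule ldet_mult_rows)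
  also have "ldet N (\<lambda>j k. C (z j) k) = S"
    unfolding C_def S_def by (rule ldet_sum_columns) simp
  finally have "(1 + \<beta> * x) ^ N * ldet (Suc N) M
      = (1 + \<beta> * x) ^ N * (x ^ (mu ! N) * (\<Prod>j<N. z j - x) * S)"
    by (simp only: mult.assoc)
  then show ?thesis
    using nondeg by (simp add: M_def S_def x_def)
qed

lemma groth_branching_nondegenerate:
  assumes mu: "is_partition mu" "length mu = Suc N"
    and inj: "inj_on z {..N}" and nondeg: "1 + \<beta> * z N \<noteq> 0"
  shows "groth mu z \<beta> =
    (\<Sum>lam\<in>{lam. is_partition lam \<and> length lam = N \<and> interlace mu lam}.
        skew_groth mu lam (z N) \<beta> * groth lam z \<beta>)"
proof -
  define I where "I = (\<lambda>k. {mu ! Suc k..mu ! k})"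
  define w where "w f = (\<Prod>k<N. branch_weight (z N) \<beta> (mu ! k) (mu ! Suc k) (f k))" for f
  define D where "D f = ldet N (\<lambda>j k. groth_entry N (f k) k \<beta> (z j))" for f
  define V where "V = (\<Prod>j<N. \<Prod>k\<in>{j<..<N}. z j - z k)"
  define P where "P = (\<Prod>j<N. z j - z N)"
  have "P \<noteq> 0"
    using inj by (auto simp: P_def inj_on_def)
  have "groth mu z \<beta> = ldet (Suc N) (\<lambda>j k. groth_entry (Suc N) (mu ! k) k \<beta> (z j)) / (V * P)"
    unfolding groth_def Let_def mu(2) prod_differences_lessThan_Suc groth_entry_def V_def P_def ..
  also have "\<dots> = z N ^ (mu ! N) * P * (\<Sum>f\<in>PiE {..<N} I. w f * D f) / (V * P)"
    unfolding groth_numerator_branching[where z = z and N = N, OF mu nondeg] I_def w_def D_def P_def ..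
  finally have groth_mu: "groth mu z \<beta> = z N ^ (mu ! N) * P * (\<Sum>f\<in>PiE {..<N} I. w f * D f) / (V * P)" .
  have groth_lam: "groth (map f [0..<N]) z \<beta> = D f / V" for f
  proof -
    have "ldet N (\<lambda>j k. z j ^ (map f [0..<N] ! k + N - 1 - k) * (1 + \<beta> * z j) ^ k) = D f"
      unfolding D_def groth_entry_def by (rule ldet_cong) simp
    then show ?thesis
      unfolding groth_def Let_def V_def by simp
  qed
  have "(\<Sum>lam\<in>{lam. is_partition lam \<and> length lam = N \<and> interlace mu lam}.
          skew_groth mu lam (z N) \<beta> * groth lam z \<beta>)
      = (\<Sum>f\<in>PiE {..<N} I. skew_groth mu (map f [0..<N]) (z N) \<beta> * groth (map f [0..<N]) z \<beta>)"
    unfolding I_def by (rule sum.reindex_bij_betw[OF interlacing_partitions_bij_betw_PiE[OF mu], symmetric])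
  also have "\<dots> = (\<Sum>f\<in>PiE {..<N} I. z N ^ (mu ! N) * w f * D f / V)"
    using skew_groth_map_PiE[OF mu(2)] by (intro sum.cong) (simp_all add: groth_lam I_def w_def)
  also have "\<dots> = groth mu z \<beta>"
    using \<open>P \<noteq> 0\<close> by (simp add: groth_mu sum_divide_distrib sum_distrib_left mult.assoc)
  finally show ?thesis ..
qed

lemma continuous_on_groth: "continuous_on UNIV (\<lambda>\<beta>. groth lam z \<beta>)"
  unfolding groth_def Let_def ldet_def divide_inverse by (intro continuous_intros)

lemma continuous_on_skew_groth: "continuous_on UNIV (\<lambda>\<beta>. skew_groth mu lam x \<beta>)"
  unfolding skew_groth_def by (cases "interlace mu lam") (auto intro!: continuous_intros)

lemma continuous_on_UNIV_eq_off_point: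
  fixes f g :: "'a::perfect_space \<Rightarrow> 'b::t2_space"
  assumes "continuous_on UNIV f" "continuous_on UNIV g" "\<And>x. x \<noteq> c \<Longrightarrow> f x = g x"
  shows "f c = g c"
proof (rule tendsto_unique[OF at_neq_bot])
  show "(f \<longlongrightarrow> f c) (at c)"
    using assms(1) by (simp add: continuous_on_def)
  have "(g \<longlongrightarrow> g c) (at c)"
    using assms(2) by (simp add: continuous_on_def)
  moreover have "\<forall>\<^sub>F x in at c. g x = f x"
    using assms(3) by (auto simp: eventually_at_filter)
  ultimately show "(f \<longlongrightarrow> g c) (at c)"
    by (rule Lim_transform_eventually)
qed

theorem mainTheorem1:
  fixes N :: nat and mu :: "nat list" and z :: "nat \<Rightarrow> complex" and \<beta> :: complex
  assumes "is_partition mu" and "length mu = N + 1"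
    and "inj_on z {..N}"
  shows "groth mu z \<beta> =
    (\<Sum>lam\<in>{lam. is_partition lam \<and> length lam = N \<and> interlace mu lam}.
        skew_groth mu lam (z N) \<beta> * groth lam z \<beta>)"
proof -
  define R where "R b = (\<Sum>lam\<in>{lam. is_partition lam \<and> length lam = N \<and> interlace mu lam}.
        skew_groth mu lam (z N) b * groth lam z b)" for b
  have branching: "groth mu z b = R b" if "1 + b * z N \<noteq> 0" for b
    unfolding R_def
    by (rule groth_branching_nondegenerate[OF assms(1) _ assms(3) that]) (simp add: assms(2))
  have "groth mu z \<beta> = R \<beta>"
  proof (cases "1 + \<beta> * z N = 0")
    case False
    then show ?thesis by (rule branching)
  next
    case True
    have "z N \<noteq> 0"
      using True by auto
    have nondeg: "1 + b * z N \<noteq> 0" if "b \<noteq> \<beta>" for b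
    proof -
      have "1 + b * z N = (b - \<beta>) * z N"
        using True by (simp add: algebra_simps)
      then show ?thesis
        using that \<open>z N \<noteq> 0\<close> by simp
    qed
    have "continuous_on UNIV R"
      unfolding R_def by (intro continuous_intros continuous_on_groth continuous_on_skew_groth)
    moreover have "groth mu z b = R b" if "b \<noteq> \<beta>" for b
      using branching nondeg that by blast
    ultimately show ?thesis
      by (rule continuous_on_UNIV_eq_off_point[OF continuous_on_groth])
  qed
  then show ?thesis
    by (simp add: R_def)
qed

end
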